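(* Let $S$ be a compact surface, $\bar p=(p_1,\dots,p_m)$ a tuple of distinct points of $\mathrm{int}(S)$, and $u\in U_{\delta_e}\cap G_{\bar p}$. Then $u$ represents the identity in $\mathrm{PMCG}(S_{\bar p})$.
   Context: $G=\mathrm{Homeo}_{\partial S}(S)$; $S$ carries a fixed hyperbolic or flat Riemannian metric $d$ with geodesic boundary. $V_\epsilon=\{g\in G: d(x,gx)<\epsilon\ \forall x\}$, $U_\epsilon=V_\epsilon\cap V_\epsilon^{-1}$. $\delta_e>0$ is such that any $x,y$ with $d(x,y)<\delta_e$ are joined by a unique minimal geodesic segment lying in $B(x,\delta_e)\cap B(y,\delta_e)$ (with $y$ in the injectivity domain of the exponential map at $x$). $G_{\bar p}$ is the pointwise stabilizer of $\bar p$, $S_{\bar p}=S\setminus\{p_1,\dots,p_m\}$, and $\mathrm{PMCG}(S_{\bar p})$ is the quotient of $G_{\bar p}$ by homotopies fixing $\partial S$ and the points $p_i$. *)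

theory Defs
  imports "HOL-Analysis.Analysis"
begin

definition half_plane :: "(real \<times> real) set" where
  "half_plane = {z. snd z \<ge> 0}"

definition surface_chart :: "'a::topological_space set \<Rightarrow> 'a set \<Rightarrow> ('a \<Rightarrow> real \<times> real) \<Rightarrow> bool" where
  "surface_chart S U h \<longleftrightarrow> openin (top_of_set S) U \<and>
     (\<exists>h' V. homeomorphism U V h h' \<and> openin (top_of_set half_plane) V)"

definition is_surface :: "'a::topological_space set \<Rightarrow> bool" where
  "is_surface S \<longleftrightarrow> (\<forall>x\<in>S. \<exists>U h. x \<in> U \<and> surface_chart S U h)"

definition surface_boundary :: "'a::topological_space set \<Rightarrow> 'a set" where
  "surface_boundary S = {x\<in>S. \<exists>U h. x \<in> U \<and> surface_chart S U h \<and> snd (h x) = 0}"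

definition surface_interior :: "'a::topological_space set \<Rightarrow> 'a set" where
  "surface_interior S = S - surface_boundary S"

definition Homeo_rel_boundary :: "'a::topological_space set \<Rightarrow> ('a \<Rightarrow> 'a) set" where
  "Homeo_rel_boundary S = {g. (\<exists>g'. homeomorphism S S g g') \<and> (\<forall>x\<in>surface_boundary S. g x = x)}"

text \<open>A minimal (distance-realising, constant speed) geodesic segment in S from x to y,
  parametrised by [0,1].\<close>
definition minimal_geodesic :: "'a::metric_space set \<Rightarrow> 'a \<Rightarrow> 'a \<Rightarrow> (real \<Rightarrow> 'a) \<Rightarrow> bool" where
  "minimal_geodesic S x y \<gamma> \<longleftrightarrow> \<gamma> 0 = x \<and> \<gamma> 1 = y \<and> \<gamma> ` {0..1} \<subseteq> S \<and>
     (\<forall>s\<in>{0..1}. \<forall>t\<in>{0..1}. dist (\<gamma> s) (\<gamma> t) = \<bar>s - t\<bar> * dist x y)"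

definition delta_e_property :: "'a::metric_space set \<Rightarrow> real \<Rightarrow> bool" where
  "delta_e_property S \<delta> \<longleftrightarrow> \<delta> > 0 \<and>
     (\<forall>x\<in>S. \<forall>y\<in>S. dist x y < \<delta> \<longrightarrow>
        (\<exists>\<gamma>. minimal_geodesic S x y \<gamma> \<and>
             (\<forall>\<gamma>'. minimal_geodesic S x y \<gamma>' \<longrightarrow> (\<forall>t\<in>{0..1}. \<gamma>' t = \<gamma> t)) \<and>
             \<gamma> ` {0..1} \<subseteq> ball x \<delta> \<inter> ball y \<delta>))"

text \<open>V_\<epsilon> and U_\<epsilon> = V_\<epsilon> \<inter> V_\<epsilon>^{-1}.\<close>
definition V_eps :: "'a::metric_space set \<Rightarrow> real \<Rightarrow> ('a \<Rightarrow> 'a) set" where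
  "V_eps S \<epsilon> = {g \<in> Homeo_rel_boundary S. \<forall>x\<in>S. dist x (g x) < \<epsilon>}"

definition U_eps :: "'a::metric_space set \<Rightarrow> real \<Rightarrow> ('a \<Rightarrow> 'a) set" where
  "U_eps S \<epsilon> = {g \<in> V_eps S \<epsilon>. \<exists>g'. homeomorphism S S g g' \<and> g' \<in> V_eps S \<epsilon>}"

definition stabiliser :: "'a::topological_space set \<Rightarrow> nat \<Rightarrow> (nat \<Rightarrow> 'a) \<Rightarrow> ('a \<Rightarrow> 'a) set" where
  "stabiliser S m p = {g \<in> Homeo_rel_boundary S. \<forall>i<m. g (p i) = p i}"

text \<open>g represents the identity of PMCG(S_p): g is homotopic to the identity by a
  homotopy fixing the boundary and the marked points at all times.\<close>
definition trivial_in_PMCG :: "'a::topological_space set \<Rightarrow> nat \<Rightarrow> (nat \<Rightarrow> 'a) \<Rightarrow> ('a \<Rightarrow> 'a) \<Rightarrow> bool" where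
  "trivial_in_PMCG S m p g \<longleftrightarrow>
     homotopic_with (\<lambda>h. \<forall>x \<in> surface_boundary S \<union> p ` {..<m}. h x = x)
       (top_of_set S) (top_of_set S) id g"

end

theory Submission
  imports Defs
begin

text \<open>Since u moves every point by less than \<delta>_e, each x is joined to u x by a unique minimal
  geodesic, and sliding x along it for time t gives the homotopy. Uniqueness of the point at
  fraction t between x and u x (concatenating two short geodesics through a competitor yields
  a competing geodesic) makes the homotopy well defined, and by compactness of S its closed
  graph makes it continuous. Points fixed by u stay fixed throughout.\<close>

lemma continuous_map_closed_graph:
  assumes "compact_space Y" and "f \<in> topspace X \<rightarrow> topspace Y"
    and "closedin (prod_topology X Y) ((\<lambda>x. (x, f x)) ` topspace X)"
  shows "continuous_map X Y f"
  unfolding continuous_map_closedin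
proof (intro conjI allI impI)
  fix C assume "closedin Y C"
  then have "closedin (prod_topology X Y) ((\<lambda>x. (x, f x)) ` topspace X \<inter> topspace X \<times> C)"
    using assms(3) by (simp add: closedin_Int closedin_prod_Times_iff)
  moreover have "{x \<in> topspace X. f x \<in> C} = fst ` ((\<lambda>x. (x, f x)) ` topspace X \<inter> topspace X \<times> C)"
    by force
  ultimately show "closedin X {x \<in> topspace X. f x \<in> C}"
    using closed_map_fst[OF assms(1)] unfolding closed_map_def by metis
qed (use assms in auto)

definition intermediate_point :: "'a::metric_space \<Rightarrow> 'a \<Rightarrow> real \<Rightarrow> 'a \<Rightarrow> bool" where
  "intermediate_point x y t z \<longleftrightarrow> dist x z = t * dist x y \<and> dist z y = (1 - t) * dist x y"

lemma intermediate_point_0_iff [simp]: "intermediate_point x y 0 z \<longleftrightarrow> z = x"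
  by (auto simp: intermediate_point_def dist_commute)

lemma intermediate_point_1_iff [simp]: "intermediate_point x y 1 z \<longleftrightarrow> z = y"
  by (auto simp: intermediate_point_def)

lemma intermediate_point_self_iff [simp]: "intermediate_point x x t z \<longleftrightarrow> z = x"
  by (auto simp: intermediate_point_def dist_commute)

lemma minimal_geodesic_intermediate_point:
  assumes "minimal_geodesic S x y \<gamma>" and "t \<in> {0..1}"
  shows "intermediate_point x y t (\<gamma> t)"
  using assms unfolding minimal_geodesic_def intermediate_point_def
  by (metis atLeastAtMost_iff abs_of_nonneg abs_minus_commute diff_ge_0_iff_ge diff_zero
      order.refl zero_le_one)

lemma minimal_geodesicI_Lipschitz:
  assumes "\<gamma> 0 = x" "\<gamma> 1 = y" "\<gamma> ` {0..1} \<subseteq> S"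
    and Lip: "\<And>s r. s \<in> {0..1} \<Longrightarrow> r \<in> {0..1} \<Longrightarrow> dist (\<gamma> s) (\<gamma> r) \<le> \<bar>s - r\<bar> * dist x y"
  shows "minimal_geodesic S x y \<gamma>"
proof -
  have "dist (\<gamma> s) (\<gamma> r) = (r - s) * dist x y"
    if "s \<in> {0..1}" "r \<in> {0..1}" "s \<le> r" for s r
  proof (rule antisym)
    show "dist (\<gamma> s) (\<gamma> r) \<le> (r - s) * dist x y"
      using Lip[OF that(1,2)] that(3) by simp
    have "dist x y \<le> dist x (\<gamma> s) + dist (\<gamma> s) (\<gamma> r) + dist (\<gamma> r) y"
      by (metis add.commute dist_triangle order_trans add_left_mono dist_triangle2)
    moreover have "dist x (\<gamma> s) \<le> s * dist x y" "dist (\<gamma> r) y \<le> (1 - r) * dist x y"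
      using Lip[of 0 s] Lip[of r 1] that assms(1,2) by auto
    ultimately show "(r - s) * dist x y \<le> dist (\<gamma> s) (\<gamma> r)"
      by (simp add: algebra_simps)
  qed
  then show ?thesis
    using assms(1-3) unfolding minimal_geodesic_def
    by (metis abs_of_nonneg abs_minus_commute diff_ge_0_iff_ge dist_commute linear)
qed

lemma minimal_geodesic_dist_rescaled:
  assumes "minimal_geodesic S x y \<gamma>" and "dist x y = c * D" and "0 < c"
    and "s \<in> {a..a + c}" "r \<in> {a..a + c}"
  shows "dist (\<gamma> ((s - a) / c)) (\<gamma> ((r - a) / c)) = \<bar>s - r\<bar> * D"
proof -
  have "(s - a) / c \<in> {0..1}" "(r - a) / c \<in> {0..1}"
    using assms(3-5) by auto
  then have "dist (\<gamma> ((s - a) / c)) (\<gamma> ((r - a) / c)) = \<bar>(s - a) / c - (r - a) / c\<bar> * (c * D)"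
    using assms(1,2) unfolding minimal_geodesic_def by simp
  also have "\<dots> = \<bar>s - r\<bar> * D"
    using \<open>0 < c\<close> by (simp add: diff_divide_distrib [symmetric] abs_divide)
  finally show ?thesis .
qed

lemma minimal_geodesic_join:
  assumes \<alpha>: "minimal_geodesic S x z \<alpha>" and \<beta>: "minimal_geodesic S z y \<beta>"
    and z: "intermediate_point x y t z" and t: "0 < t" "t < 1"
  shows "minimal_geodesic S x y (\<lambda>s. if s \<le> t then \<alpha> (s / t) else \<beta> ((s - t) / (1 - t)))"
    (is "minimal_geodesic S x y ?\<gamma>")
proof (rule minimal_geodesicI_Lipschitz)
  let ?D = "dist x y"
  have d\<alpha>: "dist (\<alpha> (s / t)) (\<alpha> (r / t)) = \<bar>s - r\<bar> * ?D" if "s \<in> {0..t}" "r \<in> {0..t}" for s r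
    using minimal_geodesic_dist_rescaled[OF \<alpha> _ t(1), of ?D s 0 r] z that
    by (simp add: intermediate_point_def)
  have d\<beta>: "dist (\<beta> ((s - t) / (1 - t))) (\<beta> ((r - t) / (1 - t))) = \<bar>s - r\<bar> * ?D"
    if "s \<in> {t..1}" "r \<in> {t..1}" for s r
    using minimal_geodesic_dist_rescaled[OF \<beta> _ _ , of "1 - t" ?D s t r] z t that
    by (simp add: intermediate_point_def)
  have \<alpha>z: "\<alpha> (t / t) = z" and \<beta>z: "\<beta> ((t - t) / (1 - t)) = z"
    using \<alpha> \<beta> t unfolding minimal_geodesic_def by auto
  have dz: "dist (?\<gamma> s) z = \<bar>s - t\<bar> * ?D" if "s \<in> {0..1}" for s
    using d\<alpha>[of s t] d\<beta>[of s t] that t unfolding \<alpha>z \<beta>z by auto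
  show "dist (?\<gamma> s) (?\<gamma> r) \<le> \<bar>s - r\<bar> * ?D" if "s \<in> {0..1}" "r \<in> {0..1}" for s r
  proof (cases "s \<le> t \<longleftrightarrow> r \<le> t")
    case True
    then show ?thesis
      using d\<alpha>[of s r] d\<beta>[of s r] that by auto
  next
    case False
    have "dist (?\<gamma> s) (?\<gamma> r) \<le> dist (?\<gamma> s) z + dist (?\<gamma> r) z"
      by (rule dist_triangle2)
    also have "\<dots> = \<bar>s - r\<bar> * ?D"
      using dz[OF that(1)] dz[OF that(2)] False by (auto simp: algebra_simps abs_if)
    finally show ?thesis .
  qed
  show "?\<gamma> 0 = x" "?\<gamma> 1 = y"
    using \<alpha> \<beta> t unfolding minimal_geodesic_def by auto
  show "?\<gamma> ` {0..1} \<subseteq> S"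
    using \<alpha> \<beta> t unfolding minimal_geodesic_def
    by (auto simp: image_subset_iff divide_le_eq_1 le_divide_eq_1)
qed

lemma delta_e_property_unique_intermediate_point:
  assumes \<delta>: "delta_e_property S \<delta>" and "x \<in> S" "y \<in> S" "dist x y < \<delta>" and t: "t \<in> {0..1}"
  shows "\<exists>!z. z \<in> S \<and> intermediate_point x y t z"
proof -
  obtain \<gamma> where \<gamma>: "minimal_geodesic S x y \<gamma>"
    and \<gamma>_unique: "\<And>\<gamma>'. minimal_geodesic S x y \<gamma>' \<Longrightarrow> \<forall>s\<in>{0..1}. \<gamma>' s = \<gamma> s"
    using \<delta> assms(2-4) unfolding delta_e_property_def by blast
  have "\<gamma> t \<in> S"
    using \<gamma> t unfolding minimal_geodesic_def by auto
  moreover have "z = \<gamma> t" if "z \<in> S" and z: "intermediate_point x y t z" for z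
  proof -
    consider "t = 0" | "t = 1" | "0 < t" "t < 1"
      using t by fastforce
    then show ?thesis
    proof cases
      case 3
      have "dist x z \<le> dist x y" "dist z y \<le> dist x y"
        using z 3 by (auto simp: intermediate_point_def mult_left_le_one_le)
      then obtain \<alpha> \<beta> where \<alpha>: "minimal_geodesic S x z \<alpha>" and \<beta>: "minimal_geodesic S z y \<beta>"
        using \<delta> assms(2-4) \<open>z \<in> S\<close> unfolding delta_e_property_def
        by (metis le_less_trans)
      have "(if t \<le> t then \<alpha> (t / t) else \<beta> ((t - t) / (1 - t))) = \<gamma> t"
        using \<gamma>_unique[OF minimal_geodesic_join[OF \<alpha> \<beta> z 3]] t by blast
      then show ?thesis
        using \<alpha> 3 unfolding minimal_geodesic_def by simp
    qed (use \<gamma> z in \<open>auto simp: minimal_geodesic_def\<close>)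
  qed
  ultimately show ?thesis
    using minimal_geodesic_intermediate_point[OF \<gamma> t] by blast
qed

text \<open>The point at fraction t on the minimal geodesic from x to y in S; unspecified unless
  that point is unique, e.g.\ when x, y are \<delta>_e-close.\<close>
definition geodesic_interpolation :: "'a::metric_space set \<Rightarrow> 'a \<Rightarrow> 'a \<Rightarrow> real \<Rightarrow> 'a" where
  "geodesic_interpolation S x y t = (THE z. z \<in> S \<and> intermediate_point x y t z)"

lemma
  assumes "delta_e_property S \<delta>" "x \<in> S" "y \<in> S" "dist x y < \<delta>" "t \<in> {0..1}"
  shows geodesic_interpolation_in: "geodesic_interpolation S x y t \<in> S"
    and intermediate_point_geodesic_interpolation:
      "intermediate_point x y t (geodesic_interpolation S x y t)"
  using theI'[OF delta_e_property_unique_intermediate_point[OF assms]]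
  unfolding geodesic_interpolation_def by auto

lemma geodesic_interpolation_eqI:
  assumes "delta_e_property S \<delta>" "x \<in> S" "y \<in> S" "dist x y < \<delta>" "t \<in> {0..1}"
    and "z \<in> S" "intermediate_point x y t z"
  shows "geodesic_interpolation S x y t = z"
  using the1_equality[OF delta_e_property_unique_intermediate_point[OF assms(1-5)]] assms(6,7)
  unfolding geodesic_interpolation_def by blast

lemma continuous_map_geodesic_interpolation:
  assumes S: "compact S" and \<delta>: "delta_e_property S \<delta>"
    and u: "continuous_on S u" "u ` S \<subseteq> S" "\<forall>x\<in>S. dist x (u x) < \<delta>"
  shows "continuous_map (prod_topology (top_of_set {0..1}) (top_of_set S)) (top_of_set S)
           (\<lambda>(t, x). geodesic_interpolation S x (u x) t)"
    (is "continuous_map ?X _ ?H")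
proof (rule continuous_map_closed_graph)
  show "compact_space (top_of_set S)"
    using S by (simp add: compact_space_subtopology)
  show "?H \<in> topspace ?X \<rightarrow> topspace (top_of_set S)"
    using geodesic_interpolation_in[OF \<delta>] u by (auto simp: Pi_iff)
  let ?d = "\<lambda>((t, x), z). (dist x z - t * dist x (u x), dist z (u x) - (1 - t) * dist x (u x))"
  have H_iff: "z = ?H (t, x) \<longleftrightarrow> z \<in> S \<and> ?d ((t, x), z) = (0, 0)"
    if "t \<in> {0..1}" "x \<in> S" for t x z
    using geodesic_interpolation_in[OF \<delta>] intermediate_point_geodesic_interpolation[OF \<delta>]
      geodesic_interpolation_eqI[OF \<delta>] u that
    unfolding intermediate_point_def by (auto simp: image_subset_iff)
  have graph: "(\<lambda>q. (q, ?H q)) ` topspace ?X = {q \<in> ({0..1} \<times> S) \<times> S. ?d q = (0, 0)}"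
  proof (intro set_eqI iffI)
    fix q assume "q \<in> (\<lambda>q. (q, ?H q)) ` topspace ?X"
    then obtain t x where "t \<in> {0..1}" "x \<in> S" "q = ((t, x), ?H (t, x))"
      by auto
    then show "q \<in> {q \<in> ({0..1} \<times> S) \<times> S. ?d q = (0, 0)}"
      using H_iff[of t x "?H (t, x)"] by simp
  next
    fix q assume "q \<in> {q \<in> ({0..1} \<times> S) \<times> S. ?d q = (0, 0)}"
    moreover obtain t x z where "q = ((t, x), z)"
      by (metis prod.collapse)
    ultimately have "t \<in> {0..1}" "x \<in> S" "z \<in> S" "?d ((t, x), z) = (0, 0)" "q = ((t, x), z)"
      by auto
    then show "q \<in> (\<lambda>q. (q, ?H q)) ` topspace ?X"
      using H_iff[of t x z] by (simp add: image_iff)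
  qed
  have "continuous_on (({0..1} \<times> S) \<times> S) (\<lambda>q. u (snd (fst q)))"
    by (rule continuous_on_compose2[OF u(1)]) (auto intro!: continuous_intros)
  then have "continuous_on (({0..1} \<times> S) \<times> S) ?d"
    unfolding case_prod_unfold by (intro continuous_intros)
  then show "closedin (prod_topology ?X (top_of_set S)) ((\<lambda>q. (q, ?H q)) ` topspace ?X)"
    unfolding graph by (simp add: subtopology_Times euclidean_product_topology
        continuous_closedin_preimage_constant)
qed

lemma homotopic_with_id_if_delta_e_close:
  assumes S: "compact S" and \<delta>: "delta_e_property S \<delta>"
    and u: "continuous_on S u" "u ` S \<subseteq> S" "\<forall>x\<in>S. dist x (u x) < \<delta>"
    and K: "K \<subseteq> S" "\<forall>x\<in>K. u x = x"
  shows "homotopic_with (\<lambda>h. \<forall>x\<in>K. h x = x) (top_of_set S) (top_of_set S) id u"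
proof -
  have interpolation_eq: "geodesic_interpolation S x (u x) t = z"
    if "x \<in> S" "t \<in> {0..1}" "z \<in> S" "intermediate_point x (u x) t z" for x t z
    using geodesic_interpolation_eqI[OF \<delta>] u that by blast
  show ?thesis
  proof (rule homotopic_with[THEN iffD2], use K in force, intro exI conjI ballI)
    show "continuous_map (prod_topology (top_of_set {0..1}) (top_of_set S)) (top_of_set S)
            (\<lambda>(t, x). geodesic_interpolation S x (u x) t)"
      by (rule continuous_map_geodesic_interpolation[OF S \<delta> u])
    show "(\<lambda>(t, x). geodesic_interpolation S x (u x) t) (0, x) = id x"
      if "x \<in> topspace (top_of_set S)" for x
      using that by (simp add: interpolation_eq)
    show "(\<lambda>(t, x). geodesic_interpolation S x (u x) t) (1, x) = u x"
      if "x \<in> topspace (top_of_set S)" for x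
      using that u(2) by (simp add: image_subset_iff interpolation_eq)
    show "(\<lambda>x. (\<lambda>(t, x). geodesic_interpolation S x (u x) t) (t, x)) x = x"
      if "t \<in> {0..1}" "x \<in> K" for t x
      using that K interpolation_eq[of x t x] by auto
  qed
qed

theorem mainTheorem6:
  fixes S :: "'a::metric_space set" and m :: nat and p :: "nat \<Rightarrow> 'a"
    and \<delta>e :: real and u :: "'a \<Rightarrow> 'a"
  assumes "compact S" and "is_surface S"
    and "delta_e_property S \<delta>e"
    and "inj_on p {..<m}" and "\<forall>i<m. p i \<in> surface_interior S"
    and "u \<in> U_eps S \<delta>e \<inter> stabiliser S m p"
  shows "trivial_in_PMCG S m p u"
proof -
  obtain u' where "homeomorphism S S u u'"
    and u_boundary: "\<forall>x\<in>surface_boundary S. u x = x"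
    and u_close: "\<forall>x\<in>S. dist x (u x) < \<delta>e" and u_marked: "\<forall>i<m. u (p i) = p i"
    using assms(6) unfolding U_eps_def V_eps_def stabiliser_def Homeo_rel_boundary_def by blast
  then have "continuous_on S u" "u ` S \<subseteq> S"
    unfolding homeomorphism_def by auto
  moreover have "surface_boundary S \<union> p ` {..<m} \<subseteq> S"
    using assms(5) unfolding surface_boundary_def surface_interior_def by auto
  ultimately show ?thesis
    unfolding trivial_in_PMCG_def
    using homotopic_with_id_if_delta_e_close[OF assms(1,3)] u_close u_boundary u_marked by blast
qed

end
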